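(* For every integer $n\geq 16$ there exists a graph $G$ on $n+1$ vertices with $r(G) > \frac{1}{3} n\log n$, together with a vertex $v\in V(G)$ such that the graph $H = G\setminus\{v\}$ obtained by deleting $v$ satisfies $r(H) = n$.
   Context: For a graph $F$, the Ramsey number $r(F)$ is the minimum $N$ such that every two-coloring of the edges of the complete graph $K_N$ contains a monochromatic copy of $F$. All logarithms are to base $2$. *)

theory Defs
  imports Complex_Main
begin

definition simple_graph :: "'a set \<Rightarrow> 'a set set \<Rightarrow> bool" where
  "simple_graph V E \<longleftrightarrow> finite V \<and>
     (\<forall>e\<in>E. \<exists>u v. u \<in> V \<and> v \<in> V \<and> u \<noteq> v \<and> e = {u, v})"

text \<open>A two-colouring of the edges of K_N (vertex set {..<N}) is a map
  c from 2-subsets to bool.\<close>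
definition mono_copy :: "'a set \<Rightarrow> 'a set set \<Rightarrow> nat \<Rightarrow> (nat set \<Rightarrow> bool) \<Rightarrow> bool" where
  "mono_copy V E N c \<longleftrightarrow>
     (\<exists>f b. inj_on f V \<and> f ` V \<subseteq> {..<N} \<and> (\<forall>e\<in>E. c (f ` e) = b))"

definition ramsey_number :: "'a set \<Rightarrow> 'a set set \<Rightarrow> nat" where
  "ramsey_number V E = (LEAST N. \<forall>c. mono_copy V E N c)"

definition delete_vertex :: "'a set \<Rightarrow> 'a set set \<Rightarrow> 'a \<Rightarrow> 'a set \<times> 'a set set" where
  "delete_vertex V E v = (V - {v}, {e \<in> E. v \<notin> e})"

end

theory Submission
  imports Defs "HOL-Library.Ramsey"
begin

(* Choose k with 4^(k-1) <= n < 4^k and let H be the clique K_k together with n - k isolated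
   vertices.  By the Erdos-Szekeres bound r(K_k) <= 4^(k-1) <= n, every two-colouring of K_n
   contains a monochromatic K_k, and the remaining vertices complete it to a copy of H; hence
   r(H) = n.  Let G be the cone over H, i.e. H plus a vertex joined to all n vertices of H.
   Split the vertices of K_(k(n-1)) into k blocks of size n - 1 and colour a pair red iff it lies
   inside a block.  A red copy of the connected graph G would lie inside one block, which has
   fewer than n + 1 vertices, and a blue copy of its clique K_(k+1) would need k + 1 blocks.  So
   r(G) > k(n-1), and this exceeds (1/3) n log n because log n < 2k. *)

lemma simple_graph_edgeE:
  assumes "simple_graph V E" "e \<in> E"
  obtains u v where "u \<in> V" "v \<in> V" "u \<noteq> v" "e = {u, v}"
  using assms unfolding simple_graph_def by meson

(* The library's ramsey2_full only provides the weaker bound (q1 + q2) choose q1. *)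
lemma partn_lst_binomial:
  assumes "0 < q1" "0 < q2"
  shows "partn_lst {..<(q1 + q2 - 2) choose (q1 - 1)} [q1, q2] 2"
  using assms
proof (induction "q1 + q2" arbitrary: q1 q2 rule: less_induct)
  case less
  consider "q1 = 1" | "q2 = 1" | "2 \<le> q1" "2 \<le> q2"
    using less.prems by linarith
  then show ?case
  proof cases
    case 1
    have "monochromatic {..<Suc 0} 1 2 f 0" for f :: "nat set \<Rightarrow> nat"
      by (force simp: monochromatic_def nsets_one nsets_singleton_iff)
    then show ?thesis using 1 by (force simp: partn_lst_def)
  next
    case 2
    have "monochromatic {..<Suc 0} 1 2 f 1" for f :: "nat set \<Rightarrow> nat"
      by (force simp: monochromatic_def nsets_one nsets_singleton_iff)
    then show ?thesis using 2 by (force simp: partn_lst_def)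
  next
    case 3
    define p1 where "p1 = (q1 + q2 - 3) choose (q1 - 2)"
    define p2 where "p2 = (q1 + q2 - 3) choose (q1 - 1)"
    have IH1: "partn_lst {..<p1} [q1 - 1, q2] 2"
      using less.hyps[of "q1 - 1" q2] 3 unfolding p1_def
      by (simp add: diff_diff_add numeral_3_eq_3 numeral_2_eq_2)
    have IH2: "partn_lst {..<p2} [q1, q2 - 1] 2"
      using less.hyps[of q1 "q2 - 1"] 3 unfolding p2_def
      by (simp add: numeral_3_eq_3 numeral_2_eq_2)
    have "0 < p1" using 3 unfolding p1_def by simp
    moreover have "p1 + p2 = (q1 + q2 - 2) choose (q1 - 1)"
      using 3 choose_reduce_nat[of "q1 + q2 - 2" "q1 - 1"] unfolding p1_def p2_def
      by (simp add: numeral_3_eq_3 numeral_2_eq_2)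
    ultimately have size: "Suc (p1 + p2 - 1) = (q1 + q2 - 2) choose (q1 - 1)" by simp
    have "partn_lst {..<Suc (p1 + p2 - 1)} [q1, q2] 2"
      using ramsey_induction_step[where r = 1, OF _ _ ramsey1_explicit] IH1 IH2 3
      by (simp add: numeral_2_eq_2)
    then show ?thesis unfolding size .
  qed
qed

lemma monochromatic_setE:
  fixes c :: "nat set \<Rightarrow> bool"
  assumes "4 ^ (k - 1) \<le> N"
  obtains A b where "A \<subseteq> {..<N}" "card A = k" "\<forall>x\<in>A. \<forall>y\<in>A. x \<noteq> y \<longrightarrow> c {x, y} = b"
proof (cases "k = 0")
  case True
  then show ?thesis using that[of "{}"] by simp
next
  case False
  have "(2 * k - 2) choose (k - 1) \<le> 2 ^ (2 * k - 2)" by (rule binomial_le_pow2)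
  also have "\<dots> = 4 ^ (k - 1)"
    using power_mult[of "2::nat" 2 "k - 1"] by (simp add: diff_mult_distrib2)
  finally have "(k + k - 2) choose (k - 1) \<le> N" using assms by (simp add: mult_2)
  then have partn: "partn_lst {..<N} [k, k] 2"
    using partn_lst_binomial[of k k] False by (blast intro: partn_lst_greater_resource)
  define f where "f e = (if c e then 0 else 1 :: nat)" for e
  have "f \<in> nsets {..<N} 2 \<rightarrow> {..<2}" by (simp add: f_def)
  then obtain i H
    where "i < length [k, k]" "H \<in> nsets {..<N} ([k, k] ! i)" "f ` nsets H 2 \<subseteq> {i}"
    by (rule partn_lstE[OF partn]) simp
  moreover have "[k, k] ! i = k" using \<open>i < length [k, k]\<close> by (auto simp: less_Suc_eq)
  ultimately have H: "H \<in> nsets {..<N} k" "f ` nsets H 2 \<subseteq> {i}" by simp_all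
  have "H \<subseteq> {..<N}" "card H = k" using H(1) by (auto simp: nsets_def)
  moreover have "c {x, y} = (i = 0)" if "x \<in> H" "y \<in> H" "x \<noteq> y" for x y
  proof -
    have "{x, y} \<in> nsets H 2" using that by simp
    then have "f {x, y} = i" using H(2) by blast
    then show ?thesis by (auto simp: f_def split: if_splits)
  qed
  ultimately show ?thesis using that by blast
qed

lemma mono_copy_from_monochromatic_set:
  assumes "finite V" "K \<subseteq> V" "simple_graph K E"
    and "A \<subseteq> {..<N}" "card A = card K" "card V \<le> N"
    and mono: "\<forall>x\<in>A. \<forall>y\<in>A. x \<noteq> y \<longrightarrow> c {x, y} = b"
  shows "mono_copy V E N c"
proof -
  have "finite K" using assms(1,2) by (rule rev_finite_subset)
  have "finite A" using assms(4) by (rule finite_subset) simp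
  obtain g where g: "bij_betw g K A"
    using finite_same_card_bij[OF \<open>finite K\<close> \<open>finite A\<close>] assms(5) by auto
  have "card (V - K) = card V - card K" using \<open>finite K\<close> assms(2) by (rule card_Diff_subset)
  moreover have "card ({..<N} - A) = N - card A"
    using \<open>finite A\<close> assms(4) by (simp add: card_Diff_subset)
  ultimately have "card (V - K) \<le> card ({..<N} - A)" using assms(5,6) by simp
  then obtain h where h: "h ` (V - K) \<subseteq> {..<N} - A" "inj_on h (V - K)"
    using card_le_inj[of "V - K" "{..<N} - A"] assms(1) by auto
  define f where "f x = (if x \<in> K then g x else h x)" for x
  have "bij_betw f K A" using g by (rule bij_betw_cong[THEN iffD1, rotated]) (simp add: f_def)
  moreover have "bij_betw f (V - K) (h ` (V - K))"
    using inj_on_imp_bij_betw[OF h(2)] by (rule bij_betw_cong[THEN iffD1, rotated]) (simp add: f_def)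
  moreover have "A \<inter> h ` (V - K) = {}" using h(1) by blast
  ultimately have "bij_betw f (K \<union> (V - K)) (A \<union> h ` (V - K))" by (rule bij_betw_combine)
  moreover have "K \<union> (V - K) = V" using assms(2) by blast
  ultimately have "bij_betw f V (A \<union> h ` (V - K))" by simp
  then have "inj_on f V" "f ` V \<subseteq> {..<N}"
    using h(1) assms(4) unfolding bij_betw_def by blast+
  moreover have "c (f ` e) = b" if e: "e \<in> E" for e
  proof -
    obtain u w where uw: "u \<in> K" "w \<in> K" "u \<noteq> w" "e = {u, w}"
      using simple_graph_edgeE[OF assms(3) e] .
    then have "g u \<noteq> g w" using bij_betw_imp_inj_on[OF g] by (meson inj_on_contraD)
    moreover have "g u \<in> A" "g w \<in> A" using uw(1,2) bij_betw_apply[OF g] by auto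
    ultimately show ?thesis using mono uw by (simp add: f_def)
  qed
  ultimately show ?thesis unfolding mono_copy_def by (intro exI[of _ f] exI[of _ b]) blast
qed

lemma mono_copy_mono: "mono_copy V E N c \<Longrightarrow> N \<le> M \<Longrightarrow> mono_copy V E M c"
  unfolding mono_copy_def by (meson lessThan_subset_iff subset_trans)

lemma card_le_of_mono_copy:
  assumes "finite V" "mono_copy V E N c"
  shows "card V \<le> N"
proof -
  obtain f where "inj_on f V" "f ` V \<subseteq> {..<N}"
    using assms(2) unfolding mono_copy_def by blast
  then have "card V \<le> card {..<N}" by (intro card_inj_on_le) auto
  then show ?thesis by simp
qed

lemma self_le_four_power_pred: "k \<le> 4 ^ (k - 1)" for k :: nat
proof -
  have "k - 1 < 2 ^ (k - 1)" by (rule less_exp)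
  also have "(2::nat) ^ (k - 1) \<le> 4 ^ (k - 1)" by (rule power_mono) auto
  finally show ?thesis by linarith
qed

lemma ex_mono_copy_all_colourings:
  assumes "simple_graph V E"
  shows "\<exists>N. \<forall>c. mono_copy V E N c"
proof -
  have fin: "finite V" using assms by (simp add: simple_graph_def)
  note self_le_four_power_pred[of "card V"]
  moreover have "mono_copy V E (4 ^ (card V - 1)) c" for c
  proof -
    obtain A b where "A \<subseteq> {..<4 ^ (card V - 1)}" "card A = card V"
      "\<forall>x\<in>A. \<forall>y\<in>A. x \<noteq> y \<longrightarrow> c {x, y} = b"
      using monochromatic_setE[of "card V" "4 ^ (card V - 1)" c] by auto
    with calculation show ?thesis
      by (intro mono_copy_from_monochromatic_set[OF fin order_refl assms])
  qed
  ultimately show ?thesis by blast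
qed

lemma less_ramsey_number:
  assumes "simple_graph V E" "\<not> mono_copy V E M c"
  shows "M < ramsey_number V E"
proof (rule ccontr)
  assume "\<not> M < ramsey_number V E"
  moreover have "\<forall>c. mono_copy V E (ramsey_number V E) c"
    unfolding ramsey_number_def using ex_mono_copy_all_colourings[OF assms(1)] by (rule LeastI_ex)
  ultimately show False using assms(2) mono_copy_mono by (metis not_less)
qed

lemma ramsey_number_eq_card:
  assumes "finite V" "\<forall>c. mono_copy V E (card V) c"
  shows "ramsey_number V E = card V"
  unfolding ramsey_number_def
  using assms card_le_of_mono_copy by (intro Least_equality) blast+

definition block_colouring :: "nat \<Rightarrow> nat set \<Rightarrow> bool" where
  "block_colouring m e \<longleftrightarrow> (\<forall>x\<in>e. \<forall>y\<in>e. x div m = y div m)"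

lemma block_colouring_doubleton [simp]: "block_colouring m {x, y} \<longleftrightarrow> x div m = y div m"
  by (auto simp: block_colouring_def)

lemma not_mono_copy_block_colouring:
  assumes "0 < m"
    and apex: "w \<in> V" "\<forall>v\<in>V - {w}. {v, w} \<in> E" "m < card V"
    and clique: "K \<subseteq> V" "\<forall>u\<in>K. \<forall>v\<in>K. u \<noteq> v \<longrightarrow> {u, v} \<in> E" "k < card K"
  shows "\<not> mono_copy V E (k * m) (block_colouring m)"
proof
  assume "mono_copy V E (k * m) (block_colouring m)"
  then obtain f b where f: "inj_on f V" "f ` V \<subseteq> {..<k * m}"
    and colour: "\<forall>e\<in>E. block_colouring m (f ` e) = b"
    unfolding mono_copy_def by blast
  have edge: "(f u div m = f v div m) = b" if "{u, v} \<in> E" for u v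
    using bspec[OF colour that] by simp
  show False
  proof (cases b)
    case True
    then have same_block: "f v div m = f w div m" if "v \<in> V" for v
      using edge[of v w] apex that by (cases "v = w") auto
    have "inj_on (\<lambda>v. f v mod m) V"
    proof (rule inj_onI)
      fix u v assume "u \<in> V" "v \<in> V" "f u mod m = f v mod m"
      then have "f u = f v" using same_block by (metis div_mult_mod_eq)
      then show "u = v" using inj_onD[OF f(1)] \<open>u \<in> V\<close> \<open>v \<in> V\<close> by blast
    qed
    moreover have "(\<lambda>v. f v mod m) ` V \<subseteq> {..<m}" using \<open>0 < m\<close> by auto
    ultimately have "card V \<le> card {..<m}" by (intro card_inj_on_le) auto
    then show False using apex(3) by simp
  next
    case False
    have "inj_on (\<lambda>v. f v div m) K"
    proof (rule inj_onI)
      fix u v assume "u \<in> K" "v \<in> K" "f u div m = f v div m"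
      then show "u = v" using edge clique(2) False by blast
    qed
    moreover have "(\<lambda>v. f v div m) ` K \<subseteq> {..<k}"
      using f(2) clique(1) by (auto intro!: less_mult_imp_div_less)
    ultimately have "card K \<le> card {..<k}" by (intro card_inj_on_le) auto
    then show False using clique(3) by simp
  qed
qed

definition clique_edges :: "'a set \<Rightarrow> 'a set set" where
  "clique_edges K = {{u, v} | u v. u \<in> K \<and> v \<in> K \<and> u \<noteq> v}"

definition cone_edges :: "'a \<Rightarrow> 'a set \<Rightarrow> 'a set set \<Rightarrow> 'a set set" where
  "cone_edges w V E = E \<union> {{v, w} | v. v \<in> V}"

lemma simple_graph_clique_edges: "finite V \<Longrightarrow> K \<subseteq> V \<Longrightarrow> simple_graph V (clique_edges K)"
  by (auto simp: simple_graph_def clique_edges_def)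

lemma simple_graph_cone:
  assumes "simple_graph V E" "w \<notin> V"
  shows "simple_graph (insert w V) (cone_edges w V E)"
  using assms unfolding simple_graph_def cone_edges_def by blast

lemma delete_vertex_cone:
  assumes "simple_graph V E" "w \<notin> V"
  shows "delete_vertex (insert w V) (cone_edges w V E) w = (V, E)"
proof -
  have "w \<notin> e" if "e \<in> E" for e
    using simple_graph_edgeE[OF assms(1) that] assms(2) by blast
  then have "{e \<in> cone_edges w V E. w \<notin> e} = E" unfolding cone_edges_def by auto
  moreover have "insert w V - {w} = V" using assms(2) by blast
  ultimately show ?thesis by (simp add: delete_vertex_def)
qed

lemma ramsey_number_clique_edges:
  assumes "finite V" "K \<subseteq> V" "4 ^ (card K - 1) \<le> card V"
  shows "ramsey_number V (clique_edges K) = card V"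
proof -
  have "mono_copy V (clique_edges K) (card V) c" for c
  proof -
    obtain A b where A: "A \<subseteq> {..<card V}" "card A = card K"
      "\<forall>x\<in>A. \<forall>y\<in>A. x \<noteq> y \<longrightarrow> c {x, y} = b"
      using monochromatic_setE[OF assms(3)] .
    have "simple_graph K (clique_edges K)"
      using rev_finite_subset[OF assms(1,2)] by (rule simple_graph_clique_edges) simp
    from mono_copy_from_monochromatic_set[OF assms(1,2) this A(1,2) order_refl A(3)]
    show ?thesis .
  qed
  then show ?thesis using assms(1) by (intro ramsey_number_eq_card) auto
qed

lemma ramsey_number_cone_gt:
  assumes "simple_graph V E" "w \<notin> V" "K \<subseteq> V" "clique_edges K \<subseteq> E" "2 \<le> card V"
  shows "card K * (card V - 1) < ramsey_number (insert w V) (cone_edges w V E)"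
proof -
  have "finite V" using assms(1) by (simp add: simple_graph_def)
  then have "finite K" using assms(3) by (rule rev_finite_subset)
  have "\<not> mono_copy (insert w V) (cone_edges w V E) (card K * (card V - 1))
          (block_colouring (card V - 1))"
  proof (rule not_mono_copy_block_colouring)
    show "\<forall>u\<in>insert w K. \<forall>v\<in>insert w K. u \<noteq> v \<longrightarrow> {u, v} \<in> cone_edges w V E"
      using assms(3,4) by (auto simp: cone_edges_def clique_edges_def insert_commute)
    have "w \<notin> K" using assms(2,3) by blast
    then show "card K < card (insert w K)" using \<open>finite K\<close> by simp
  qed (use assms \<open>finite V\<close> in \<open>auto simp: cone_edges_def\<close>)
  then show ?thesis using simple_graph_cone[OF assms(1,2)] by (rule less_ramsey_number[rotated])
qed

lemma third_mult_log_less: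
  fixes n k :: nat
  assumes "3 \<le> n" "n < 4 ^ k"
  shows "1/3 * real n * log 2 (real n) < real (k * (n - 1))"
proof -
  have "n < 2 ^ (2 * k)" using assms(2) by (simp add: power_mult)
  then have "log 2 (real n) < 2 * real k" using assms(1) log2_of_power_less by fastforce
  then have "1/3 * real n * log 2 (real n) < 1/3 * real n * (2 * real k)"
    using assms(1) by (intro mult_strict_left_mono) auto
  also have "\<dots> = real k * (2/3 * real n)" by simp
  also have "\<dots> \<le> real k * (real n - 1)"
    using assms(1) by (intro mult_left_mono) auto
  also have "\<dots> = real (k * (n - 1))" using assms(1) by simp
  finally show ?thesis .
qed

theorem theorem1p2:
  fixes n :: nat
  assumes "n \<ge> 16"
  shows "\<exists>(V :: nat set) E v.
           simple_graph V E \<and> card V = n + 1 \<and> v \<in> V \<and>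
           real (ramsey_number V E) > 1/3 * real n * log 2 (real n) \<and>
           ramsey_number (fst (delete_vertex V E v)) (snd (delete_vertex V E v)) = n"
proof -
  obtain j where j: "4 ^ j \<le> n" "n < 4 ^ (j + 1)"
    using ex_power_ivl1[of 4 n] assms by auto
  define k where "k = j + 1"
  have "k \<le> n" using self_le_four_power_pred[of k] j(1) by (simp add: k_def)
  define H where "H = clique_edges {..<k}"
  have H: "simple_graph {..<n} H"
    unfolding H_def using \<open>k \<le> n\<close> by (intro simple_graph_clique_edges) auto
  have "1/3 * real n * log 2 (real n) < real (k * (n - 1))"
    using third_mult_log_less[of n k] assms j(2) by (simp add: k_def)
  also have "\<dots> < real (ramsey_number (insert n {..<n}) (cone_edges n {..<n} H))"
    unfolding of_nat_less_iff
    using ramsey_number_cone_gt[OF H, of n "{..<k}"] \<open>k \<le> n\<close> assms by (auto simp: H_def)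
  moreover have "ramsey_number {..<n} H = n"
    unfolding H_def using j(1) \<open>k \<le> n\<close> by (subst ramsey_number_clique_edges) (auto simp: k_def)
  ultimately show ?thesis
    using simple_graph_cone[OF H] delete_vertex_cone[OF H]
    by (intro exI[of _ "insert n {..<n}"] exI[of _ "cone_edges n {..<n} H"] exI[of _ n]) auto
qed

end
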